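(* If $\sigma(x)/x\in\mathbb{Z}[\zeta_p]$, then the lattice $\varphi_{1/p^2}(M)$ (a rotated version of $D_n$) satisfies $d_{p,\min}(\varphi_{1/p^2}(M))\ge p^{(1-n)/2}$.
   Context: Let $n>1$ be an odd integer and $p$ a prime with $p\equiv 1 \pmod n$. Let $\zeta_p=e^{2\pi i/p}$, let $r$ be a primitive root modulo $p$, and let $\sigma$ be the automorphism of $\mathbb{Q}(\zeta_p)$ with $\sigma(\zeta_p)=\zeta_p^r$. Let $\mathbb{K}=\{y\in\mathbb{Q}(\zeta_p):\sigma^n(y)=y\}$ (totally real of degree $n$, embeddings into $\mathbb{R}$ given by restrictions of $\sigma^0,\dots,\sigma^{n-1}$). Let $\alpha=\prod_{j=0}^{(p-3)/2}(1-\zeta_p^{r^j})$, $\lambda$ an integer with $\lambda(r-1)\equiv1\pmod p$, $z=\zeta_p^{\lambda}\alpha(1-\zeta_p)$, $x=\mathrm{Tr}_{\mathbb{Q}(\zeta_p)/\mathbb{K}}(z)=\sum_{j=1}^{(p-1)/n}\sigma^{jn}(z)$. Let $M$ be the $\mathbb{Z}$-module generated by $x+\sigma(x),\ x-\sigma(x),\ \sigma(x)-\sigma^2(x),\dots,\sigma^{n-2}(x)-\sigma^{n-1}(x)$. For totally positive $\beta\in\mathbb{K}$, $\varphi_\beta(y)=(\sqrt{\sigma^0(\beta)}\sigma^0(y),\dots,\sqrt{\sigma^{n-1}(\beta)}\sigma^{n-1}(y))$. For a lattice $\Lambda\subset\mathbb{R}^n$ with all nonzero vectors having all coordinates nonzero,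 $d_{p,\min}(\Lambda)=\inf\{|y_1\cdots y_n|: 0\neq y\in\Lambda\}$. *)

theory Defs
  imports "HOL-Analysis.Analysis" "HOL-Number_Theory.Number_Theory"
begin

definition zeta :: "nat \<Rightarrow> complex" where
  "zeta p = exp (2 * of_real pi * \<i> / of_nat p)"

(* z = zeta^lam * alpha * (1 - zeta) written as an integer-coefficient expression in zeta;
   since sigma^k(zeta) = zeta^(r^k), sigma^k(z) = zfun p r lam (zeta p ^ (r^k)) *)
definition zfun :: "nat \<Rightarrow> nat \<Rightarrow> int \<Rightarrow> complex \<Rightarrow> complex" where
  "zfun p r lam w = w powi lam * (\<Prod>j\<in>{0..(p - 3) div 2}. (1 - w ^ (r ^ j))) * (1 - w)"

(* sigma^k(x), where x = sum_{j=1}^{(p-1)/n} sigma^{jn}(z) *)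
definition sigx :: "nat \<Rightarrow> nat \<Rightarrow> nat \<Rightarrow> int \<Rightarrow> nat \<Rightarrow> complex" where
  "sigx n p r lam k = (\<Sum>j\<in>{1..(p - 1) div n}. zfun p r lam (zeta p ^ (r ^ (j * n + k))))"

(* sigma^k(g_l) for the generators g_0 = x + sigma x, g_1 = x - sigma x,
   g_l = sigma^(l-1) x - sigma^l x  (2 <= l <= n-1) of M *)
definition sig_gen :: "nat \<Rightarrow> nat \<Rightarrow> nat \<Rightarrow> int \<Rightarrow> nat \<Rightarrow> nat \<Rightarrow> complex" where
  "sig_gen n p r lam l k =
     (if l = 0 then sigx n p r lam k + sigx n p r lam (k + 1)
      else if l = 1 then sigx n p r lam k - sigx n p r lam (k + 1)
      else sigx n p r lam (k + l - 1) - sigx n p r lam (k + l))"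

definition Mmod :: "nat \<Rightarrow> nat \<Rightarrow> nat \<Rightarrow> int \<Rightarrow> complex set" where
  "Mmod n p r lam = {(\<Sum>l<n. of_int (a l) * sig_gen n p r lam l 0) | a :: nat \<Rightarrow> int. True}"

(* phi_beta(M) for a (totally positive) rational beta, so sigma^i(beta) = beta;
   the vector has coordinates i < n, coordinate i being sqrt(beta) * sigma^i(y),
   computed by additivity of sigma^i from the integer coordinates of y in the generators *)
definition phiM :: "nat \<Rightarrow> nat \<Rightarrow> nat \<Rightarrow> int \<Rightarrow> real \<Rightarrow> (nat \<Rightarrow> complex) set" where
  "phiM n p r lam beta =
     {(\<lambda>i. of_real (sqrt beta) * (\<Sum>l<n. of_int (a l) * sig_gen n p r lam l i)) | a :: nat \<Rightarrow> int. True}"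

definition dpmin :: "nat \<Rightarrow> (nat \<Rightarrow> complex) set \<Rightarrow> real" where
  "dpmin n L = Inf {cmod (\<Prod>i<n. v i) | v. v \<in> L \<and> (\<exists>i<n. v i \<noteq> 0)}"

definition Zzeta :: "nat \<Rightarrow> complex set" where
  "Zzeta p = {(\<Sum>k<p. of_int (c k) * zeta p ^ k) | c :: nat \<Rightarrow> int. True}"

end

theory Submission
  imports Defs "HOL-Computational_Algebra.Polynomial_Factorial"
begin

text \<open>A vector of \<open>\<phi>(M)\<close>, \<open>\<phi> = \<phi>\<^bsub>1/p\<^sup>2\<^esub>\<close>, has coordinates \<open>\<sigma>\<^sup>i(y)/p\<close>
  (\<open>i < n\<close>) with \<open>y = Y(\<zeta>)\<close> for an integer polynomial \<open>Y\<close> divisible by \<open>(1 - X)^((p+1)/2)\<close>,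
  because \<open>z\<close> already has \<open>(p+1)/2\<close> factors of the form \<open>1 - \<zeta>^k\<close>. The partial norm
  \<open>N = \<Prod>i<n. \<sigma>\<^sup>i(y)\<close> is Galois invariant, hence a rational integer, and it is nonzero as
  soon as one coordinate is, since the cyclotomic polynomial \<open>\<Phi>\<^sub>p\<close> is irreducible. Its power
  \<open>N^((p-1)/n)\<close> is the full norm of \<open>y\<close>, a multiple of \<open>p^((p+1)/2)\<close>; comparing \<open>p\<close>-adic
  valuations gives \<open>p^((n+1)/2) dvd N\<close>, so the product of the coordinates has absolute value
  \<open>|N|/p^n \<ge> p^((1-n)/2)\<close>.\<close>

text \<open>Through HOL-Number_Theory, \<open>Defs\<close> imports HOL-Algebra, whose \<open>monom\<close>, \<open>coeff\<close> and \<open>smult\<close> would shadow the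
  polynomial operations.\<close>

hide_const (open) up_ring.monom up_ring.coeff module.smult

section \<open>Powers of \<open>\<zeta>\<^sub>p\<close> and the geometric polynomial\<close>

text \<open>For prime \<open>p\<close>, \<open>geom_poly p\<close> is the cyclotomic polynomial \<open>\<Phi>\<^sub>p\<close>.\<close>

definition geom_poly :: "nat \<Rightarrow> 'a::comm_ring_1 poly" where
  "geom_poly p = (\<Sum>k<p. monom 1 k)"

lemma coeff_geom_poly: "coeff (geom_poly p) k = (if k < p then 1 else 0)"
  unfolding geom_poly_def by (simp add: coeff_sum coeff_monom)

lemma degree_geom_poly: "p \<ge> 1 \<Longrightarrow> degree (geom_poly p :: 'a::comm_ring_1 poly) = p - 1"
  by (intro antisym degree_le le_degree) (auto simp: coeff_geom_poly)

lemma linear_times_geom_poly: "[:-1, 1:] * geom_poly p = (monom 1 p - 1 :: 'a::comm_ring_1 poly)"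
proof -
  have "[:-1, 1:] * geom_poly p = (\<Sum>k<p. monom 1 (Suc k) - monom 1 k :: 'a poly)"
    unfolding geom_poly_def sum_distrib_left
  proof (rule sum.cong)
    show "[:-1, 1:] * monom 1 k = monom 1 (Suc k) - (monom 1 k :: 'a poly)" for k
      by (rule poly_eqI) (simp add: coeff_monom_mult coeff_pCons split: nat.splits)
  qed simp
  also have "\<dots> = monom 1 p - monom 1 0" by (rule sum_lessThan_telescope)
  finally show ?thesis by (simp add: one_pCons)
qed

lemma geom_poly_nonzero: "p \<ge> 1 \<Longrightarrow> (geom_poly p :: 'a::comm_ring_1 poly) \<noteq> 0"
  by (auto simp: poly_eq_iff coeff_geom_poly intro!: exI[of _ 0])

lemma poly_geom_poly: "poly (geom_poly p) x = (\<Sum>k<p. x ^ k)"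
  by (simp add: geom_poly_def poly_sum poly_monom)

lemma zeta_power: "zeta p ^ k = exp (2 * of_real pi * \<i> * of_nat k / of_nat p)"
  unfolding zeta_def by (simp add: exp_of_nat_mult[symmetric] mult_ac)

lemma zeta_power_eq_iff: "p > 0 \<Longrightarrow> zeta p ^ j = zeta p ^ k \<longleftrightarrow> j mod p = k mod p"
  unfolding zeta_power by (rule complex_root_unity_eq) simp

lemma zeta_power_eq_1_iff: "p > 0 \<Longrightarrow> zeta p ^ j = 1 \<longleftrightarrow> p dvd j"
  unfolding zeta_power by (rule complex_root_unity_eq_1) simp

lemma zeta_power_mod: "p > 0 \<Longrightarrow> zeta p ^ (k mod p) = zeta p ^ k"
  by (simp add: zeta_power_eq_iff)

lemma zeta_power_power_self: "p > 0 \<Longrightarrow> (zeta p ^ k) ^ p = 1"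
  by (simp add: zeta_power_eq_1_iff flip: power_mult)

lemma sum_zeta_power_mult:
  assumes "p > 1" "\<not> p dvd m"
  shows "(\<Sum>a<p. zeta p ^ (a * m)) = 0"
proof -
  have "zeta p ^ m \<noteq> 1" using assms by (simp add: zeta_power_eq_1_iff)
  then have "(\<Sum>a<p. (zeta p ^ m) ^ a) = ((zeta p ^ m) ^ p - 1) / (zeta p ^ m - 1)"
    by (rule geometric_sum)
  also have "\<dots> = 0" using assms by (simp add: zeta_power_power_self)
  finally show ?thesis by (simp add: mult.commute[of _ m] power_mult)
qed

lemma sum_nonzero_zeta_power_mult:
  assumes "p > 1"
  shows "(\<Sum>a\<in>{1..<p}. zeta p ^ (a * m)) = (if p dvd m then of_nat p - 1 else -1)"
proof -
  have "(\<Sum>a\<in>{1..<p}. zeta p ^ (a * m)) = (\<Sum>a<p. zeta p ^ (a * m)) - 1"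
    using assms by (simp add: lessThan_atLeast0 sum.atLeast_Suc_lessThan)
  also have "(\<Sum>a<p. zeta p ^ (a * m)) = (if p dvd m then of_nat p else 0)"
  proof (cases "p dvd m")
    case True
    then have "zeta p ^ (a * m) = 1" for a using assms by (simp add: zeta_power_eq_1_iff)
    then show ?thesis using True by simp
  qed (use sum_zeta_power_mult[OF assms] in simp)
  finally show ?thesis by simp
qed

lemma prod_X_minus_zeta_power:
  assumes "p > 0"
  shows "(\<Prod>a<p. [:- (zeta p ^ a), 1:]) = monom 1 p - 1"
    (is "?P = ?Q")
proof (rule ccontr)
  assume "?P \<noteq> ?Q"
  then have nz: "?Q - ?P \<noteq> 0" by simp
  have Q: "?Q = monom 1 p + [:-1:]" by (simp add: one_pCons)
  have "degree ?Q = p"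
    unfolding Q using assms by (subst degree_add_eq_left) (simp_all add: degree_monom_eq)
  moreover have "lead_coeff ?Q = 1"
    using assms \<open>degree ?Q = p\<close> unfolding Q by (simp add: coeff_pCons split: nat.split)
  moreover have "degree ?P = p" "lead_coeff ?P = 1"
    by (simp add: degree_prod_eq_sum_degree) (simp add: lead_coeff_prod)
  ultimately have "coeff (?Q - ?P) p = 0" "degree (?Q - ?P) \<le> p"
    by (auto intro: degree_diff_le)
  then have "degree (?Q - ?P) < p"
    using nz by (metis le_neq_implies_less leading_coeff_0_iff)
  have "poly ?P (zeta p ^ a) = 0" "poly ?Q (zeta p ^ a) = 0" if "a < p" for a
    using that assms by (auto simp: poly_prod poly_monom zeta_power_power_self intro!: prod_zero)
  then have roots: "(\<lambda>a. zeta p ^ a) ` {..<p} \<subseteq> {x. poly (?Q - ?P) x = 0}" by auto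
  have "inj_on (\<lambda>a. zeta p ^ a) {..<p}"
    using assms by (auto simp: inj_on_def zeta_power_eq_iff)
  then have "p = card ((\<lambda>a. zeta p ^ a) ` {..<p})" by (simp add: card_image)
  also have "\<dots> \<le> card {x. poly (?Q - ?P) x = 0}"
    using roots by (intro card_mono poly_roots_finite nz)
  also have "\<dots> \<le> degree (?Q - ?P)" by (rule card_poly_roots_bound[OF nz])
  finally show False using \<open>degree (?Q - ?P) < p\<close> by simp
qed

lemma prod_one_minus_zeta_power:
  assumes "p > 1"
  shows "(\<Prod>a\<in>{1..<p}. 1 - zeta p ^ a) = of_nat p"
proof -
  have "[:-1, 1:] * (\<Prod>a\<in>{1..<p}. [:- (zeta p ^ a), 1:]) = (\<Prod>a<p. [:- (zeta p ^ a), 1:])"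
    using assms by (simp add: lessThan_atLeast0 prod.atLeast_Suc_lessThan)
  also have "\<dots> = [:-1, 1:] * geom_poly p"
    using assms by (simp only: prod_X_minus_zeta_power linear_times_geom_poly)
  finally have "(\<Prod>a\<in>{1..<p}. [:- (zeta p ^ a), 1:]) = geom_poly p"
    by (metis mult_cancel_left pCons_eq_0_iff zero_neq_one)
  from arg_cong[OF this, of "\<lambda>q. poly q 1"] show ?thesis
    by (simp add: poly_prod poly_geom_poly)
qed

section \<open>Integer polynomials evaluated at powers of \<open>\<zeta>\<^sub>p\<close>\<close>

definition ipoly :: "int poly \<Rightarrow> 'a::comm_ring_1 \<Rightarrow> 'a" where
  "ipoly g x = poly (map_poly of_int g) x"

lemma map_poly_of_int_add: "map_poly of_int (f + g) = map_poly of_int f + map_poly of_int g"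
  by (rule poly_eqI) (simp add: coeff_map_poly)

lemma map_poly_of_int_diff: "map_poly of_int (f - g) = map_poly of_int f - map_poly of_int g"
  by (rule poly_eqI) (simp add: coeff_map_poly)

lemma map_poly_of_int_mult: "map_poly of_int (f * g) = map_poly of_int f * map_poly of_int g"
  by (rule poly_eqI) (simp add: coeff_map_poly coeff_mult)

lemma map_poly_of_int_pCons: "map_poly of_int (pCons a f) = pCons (of_int a) (map_poly of_int f)"
  by (rule poly_eqI) (simp add: coeff_map_poly coeff_pCons split: nat.splits)

lemma map_poly_of_int_pcompose:
  "map_poly of_int (pcompose f g) = pcompose (map_poly of_int f) (map_poly of_int g)"
  by (induction f)
    (simp_all add: pcompose_pCons map_poly_of_int_pCons map_poly_of_int_add map_poly_of_int_mult)

lemma ipoly_add [simp]: "ipoly (f + g) x = ipoly f x + ipoly g x"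
  by (simp add: ipoly_def map_poly_of_int_add)

lemma ipoly_diff [simp]: "ipoly (f - g) x = ipoly f x - ipoly g x"
  by (simp add: ipoly_def map_poly_of_int_diff)

lemma ipoly_mult [simp]: "ipoly (f * g) x = ipoly f x * ipoly g x"
  by (simp add: ipoly_def map_poly_of_int_mult)

lemma ipoly_0 [simp]: "ipoly 0 x = 0"
  by (simp add: ipoly_def)

lemma ipoly_1 [simp]: "ipoly 1 x = 1"
  by (simp add: ipoly_def)

lemma ipoly_const [simp]: "ipoly [:c:] x = of_int c"
  by (simp add: ipoly_def map_poly_of_int_pCons)

lemma ipoly_linear [simp]: "ipoly [:1, -1:] x = 1 - x"
  by (simp add: ipoly_def map_poly_pCons)

lemma ipoly_monom [simp]: "ipoly (monom c k) x = of_int c * x ^ k"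
  by (simp add: ipoly_def map_poly_monom poly_monom)

lemma ipoly_smult [simp]: "ipoly (smult c f) x = of_int c * ipoly f x"
  using ipoly_mult[of "[:c:]" f x] by simp

lemma ipoly_power [simp]: "ipoly (f ^ k) x = ipoly f x ^ k"
  by (induction k) simp_all

lemma ipoly_prod [simp]: "ipoly (\<Prod>i\<in>A. f i) x = (\<Prod>i\<in>A. ipoly (f i) x)"
  by (induction A rule: infinite_finite_induct) simp_all

lemma ipoly_sum [simp]: "ipoly (\<Sum>i\<in>A. f i) x = (\<Sum>i\<in>A. ipoly (f i) x)"
  by (induction A rule: infinite_finite_induct) simp_all

lemma ipoly_pcompose_monom [simp]: "ipoly (pcompose f (monom 1 k)) x = ipoly f (x ^ k)"
  by (simp add: ipoly_def map_poly_of_int_pcompose map_poly_monom poly_pcompose poly_monom)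

lemma ipoly_geom_poly: "ipoly (geom_poly p) x = (\<Sum>k<p. x ^ k)"
  by (simp add: geom_poly_def)

lemma ipoly_altdef:
  "ipoly g (x :: 'a::{comm_ring_1,ring_char_0}) = (\<Sum>k\<le>degree g. of_int (coeff g k) * x ^ k)"
  by (cases "g = 0") (simp_all add: ipoly_def poly_altdef map_poly_degree_eq coeff_map_poly)

text \<open>Multiplying the \<open>a\<close>-th conjugate by \<open>\<zeta>\<^sup>-\<^sup>a\<close> and summing turns every monomial into
  a rational integer, while the left-hand side becomes \<open>-c\<close>.\<close>

lemma in_Ints_if_zeta_conjugates_eq:
  assumes p: "prime p" and conj: "\<And>a. a \<in> {1..<p} \<Longrightarrow> ipoly g (zeta p ^ a) = c"
  shows "c \<in> \<int>"
proof -
  have p1: "p > 1" using p prime_gt_1_nat by blast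
  have "\<not> p dvd (p - 1)" using p1 by (intro nat_dvd_not_less) auto
  define s where "s k = (if p dvd (p - 1 + k) then int p - 1 else - 1)" for k
  have "- c = (\<Sum>a\<in>{1..<p}. zeta p ^ (a * (p - 1))) * c"
    using sum_nonzero_zeta_power_mult[OF p1, of "p - 1"] \<open>\<not> p dvd (p - 1)\<close> by simp
  also have "\<dots> = (\<Sum>a\<in>{1..<p}. zeta p ^ (a * (p - 1)) * ipoly g (zeta p ^ a))"
    by (simp add: sum_distrib_right conj)
  also have "\<dots> = (\<Sum>a\<in>{1..<p}. \<Sum>k\<le>degree g. of_int (coeff g k) * zeta p ^ (a * (p - 1 + k)))"
    unfolding distrib_left power_add power_mult ipoly_altdef sum_distrib_left by (simp add: mult_ac)
  also have "\<dots> = (\<Sum>k\<le>degree g. of_int (coeff g k) * (\<Sum>a\<in>{1..<p}. zeta p ^ (a * (p - 1 + k))))"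
    by (subst sum.swap) (simp add: sum_distrib_left)
  also have "\<dots> = (\<Sum>k\<le>degree g. of_int (coeff g k) * (if p dvd (p - 1 + k) then of_nat p - 1 else - 1))"
    by (simp only: sum_nonzero_zeta_power_mult[OF p1])
  also have "\<dots> = of_int (\<Sum>k\<le>degree g. coeff g k * s k)"
    unfolding s_def of_int_sum by (intro sum.cong) auto
  finally have "c = of_int (- (\<Sum>k\<le>degree g. coeff g k * s k))"
    by (metis minus_minus of_int_minus)
  then show ?thesis by (metis Ints_of_int)
qed

section \<open>Irreducibility of the cyclotomic polynomial \<open>\<Phi>\<^sub>p\<close>\<close>

lemma prime_dvd_coeff_0_of_factor:
  fixes A B :: "int poly" and q :: int
  assumes q: "prime q" and "degree B > 0"
    and lead: "\<not> q dvd lead_coeff (A * B)"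
    and low: "\<forall>k < degree (A * B). q dvd coeff (A * B) k"
  shows "q dvd coeff B 0"
proof (rule ccontr)
  assume "\<not> q dvd coeff B 0"
  have "A \<noteq> 0" using lead by auto
  then have degAB: "degree (A * B) = degree A + degree B"
    using \<open>degree B > 0\<close> by (intro degree_mult_eq) auto
  have "\<not> q dvd lead_coeff A"
    using lead by (metis lead_coeff_mult dvd_mult2)
  define i where "i = (LEAST i. \<not> q dvd coeff A i)"
  have "\<not> q dvd coeff A i"
    unfolding i_def by (rule LeastI[of _ "degree A"]) fact
  have "i \<le> degree A"
    unfolding i_def by (rule Least_le) fact
  have below: "q dvd coeff A j" if "j < i" for j
    using that unfolding i_def using not_less_Least by blast
  have "coeff (A * B) i = coeff A i * coeff B 0 + (\<Sum>j<i. coeff A j * coeff B (i - j))"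
    by (simp add: coeff_mult lessThan_Suc_atMost[symmetric])
  moreover have "q dvd coeff (A * B) i"
    using low \<open>degree B > 0\<close> \<open>i \<le> degree A\<close> degAB by simp
  moreover have "q dvd (\<Sum>j<i. coeff A j * coeff B (i - j))"
    by (intro dvd_sum dvd_mult2 below) simp
  ultimately have "q dvd coeff A i * coeff B 0" by (simp add: dvd_add_left_iff)
  then show False
    using \<open>\<not> q dvd coeff A i\<close> \<open>\<not> q dvd coeff B 0\<close> q by (simp add: prime_dvd_mult_iff)
qed

lemma Eisenstein_criterion:
  fixes A B :: "int poly" and q :: int
  assumes q: "prime q"
    and low: "\<forall>k < degree (A * B). q dvd coeff (A * B) k"
    and lead: "\<not> q dvd lead_coeff (A * B)"
    and const: "\<not> q\<^sup>2 dvd coeff (A * B) 0"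
  shows "degree A = 0 \<or> degree B = 0"
proof (rule ccontr)
  assume "\<not> (degree A = 0 \<or> degree B = 0)"
  then have "q dvd coeff B 0" "q dvd coeff A 0"
    using prime_dvd_coeff_0_of_factor[OF q, of B A] prime_dvd_coeff_0_of_factor[OF q, of A B]
      low lead by (simp_all add: mult.commute)
  then have "q\<^sup>2 dvd coeff (A * B) 0"
    by (simp add: coeff_mult_0 power2_eq_square mult_dvd_mono)
  with const show False ..
qed

lemma coeff_geom_poly_shift:
  assumes "k < p"
  shows "coeff (pcompose (geom_poly p) [:1, 1:]) k = int (p choose Suc k)"
proof -
  have "poly ([:0, 1:] * pcompose (geom_poly p) [:1, 1:]) x = poly ([:1, 1:] ^ p - 1) x" for x :: int
    using power_diff_1_eq[of "1 + x" p] by (simp add: poly_pcompose poly_geom_poly)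
  then have "poly ([:0, 1:] * pcompose (geom_poly p) [:1, 1:]) = poly ([:1, 1:] ^ p - 1 :: int poly)"
    by blast
  then have "[:0, 1:] * pcompose (geom_poly p) [:1, 1:] = [:1, 1:] ^ p - (1 :: int poly)"
    by (simp only: poly_eq_poly_eq_iff)
  from arg_cong[OF this, of "\<lambda>f. coeff f (Suc k)"] show ?thesis
    using assms by (simp add: coeff_linear_poly_power)
qed

lemma irreducible_geom_poly:
  assumes p: "prime p"
  shows "irreducible (geom_poly p :: int poly)"
proof (rule irreducibleI)
  have p1: "p > 1" using p prime_gt_1_nat by blast
  then have deg: "degree (geom_poly p :: int poly) = p - 1" by (simp add: degree_geom_poly)
  show "geom_poly p \<noteq> (0 :: int poly)" using p1 by (simp add: geom_poly_nonzero)
  show "\<not> is_unit (geom_poly p :: int poly)"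
    using deg p1 by (auto simp: is_unit_poly_iff)
  fix A B :: "int poly"
  assume AB: "geom_poly p = A * B"
  define \<psi> :: "int poly" where "\<psi> = pcompose (geom_poly p) [:1, 1:]"
  have \<psi>: "\<psi> = pcompose A [:1, 1:] * pcompose B [:1, 1:]"
    unfolding \<psi>_def AB by (rule pcompose_mult)
  have "degree \<psi> = p - 1" unfolding \<psi>_def by (simp add: degree_pcompose deg)
  have "\<forall>k < degree \<psi>. int p dvd coeff \<psi> k"
    using \<open>degree \<psi> = p - 1\<close> p by (auto simp: \<psi>_def coeff_geom_poly_shift dvd_choose_prime)
  moreover have "lead_coeff \<psi> = 1"
    using \<open>degree \<psi> = p - 1\<close> p1 by (simp add: \<psi>_def coeff_geom_poly_shift)
  moreover have "coeff \<psi> 0 = int p"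
    unfolding \<psi>_def using coeff_geom_poly_shift[of 0 p] p1 by simp
  ultimately have "degree (pcompose A [:1, 1:]) = 0 \<or> degree (pcompose B [:1, 1:]) = 0"
    using p p1 unfolding \<psi> by (intro Eisenstein_criterion) (auto simp: power2_eq_square)
  then have "degree A = 0 \<or> degree B = 0" by (simp add: degree_pcompose)
  moreover have "is_unit C" if "degree C = 0" "geom_poly p = C * D" for C D :: "int poly"
  proof -
    obtain c where "C = [:c:]" using \<open>degree C = 0\<close> by (rule degree_eq_zeroE)
    moreover have "coeff (geom_poly p) 0 = c * coeff D 0"
      using that(2) \<open>C = [:c:]\<close> by simp
    then have "c * coeff D 0 = 1" using p1 by (simp add: coeff_geom_poly)
    ultimately show ?thesis by (metis dvdI is_unit_const_poly_iff)
  qed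
  ultimately show "is_unit A \<or> is_unit B" using AB by (metis mult.commute)
qed

lemma ipoly_geom_poly_zeta_power:
  assumes "p > 1" "\<not> p dvd c"
  shows "ipoly (geom_poly p) (zeta p ^ c) = 0"
  using sum_zeta_power_mult[OF assms] by (simp add: ipoly_geom_poly mult.commute flip: power_mult)

text \<open>A nonzero integer polynomial of least degree vanishing at \<open>\<zeta>\<^sub>p\<close> is a divisor of
  \<open>c \<cdot> \<Phi>\<^sub>p\<close> (pseudo-division), so by primality of \<open>\<Phi>\<^sub>p\<close> it has degree at least \<open>p - 1\<close>.\<close>

lemma degree_ge_if_ipoly_zeta_eq_0:
  assumes p: "prime p" and "g \<noteq> 0" "ipoly g (zeta p) = 0"
  shows "degree g \<ge> p - 1"
proof -
  have p1: "p > 1" using p prime_gt_1_nat by blast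
  define S where "S = {g :: int poly. g \<noteq> 0 \<and> ipoly g (zeta p) = 0}"
  obtain g0 where g0: "g0 \<in> S" and min: "\<And>h. h \<in> S \<Longrightarrow> degree g0 \<le> degree h"
    using ex_has_least_nat[of "\<lambda>h. h \<in> S" g degree] assms unfolding S_def by blast
  have "g0 \<noteq> 0" and g0_root: "ipoly g0 (zeta p) = 0" using g0 by (auto simp: S_def)
  obtain q r where qr: "pseudo_divmod (geom_poly p) g0 = (q, r)" by fastforce
  define c where "c = lead_coeff g0 ^ (Suc (degree (geom_poly p :: int poly)) - degree g0)"
  have eq: "smult c (geom_poly p) = g0 * q + r" and "r = 0 \<or> degree r < degree g0"
    using pseudo_divmod[OF \<open>g0 \<noteq> 0\<close> qr] by (simp_all add: c_def)
  have "ipoly (geom_poly p) (zeta p) = 0"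
    using ipoly_geom_poly_zeta_power[OF p1, of 1] p1 by simp
  then have "ipoly r (zeta p) = 0"
    using arg_cong[OF eq, of "\<lambda>f. ipoly f (zeta p)"] g0_root by simp
  then have "r = 0" using min \<open>r = 0 \<or> degree r < degree g0\<close> by (force simp: S_def)
  then have "geom_poly p * [:c:] = g0 * q" using eq by simp
  then have "geom_poly p dvd g0 \<or> geom_poly p dvd q"
    using irreducible_imp_prime_poly[OF irreducible_geom_poly[OF p]]
    by (metis dvd_triv_left prime_elem_dvd_mult_iff)
  then have "degree (geom_poly p :: int poly) \<le> degree g0"
  proof
    assume "geom_poly p dvd q"
    then obtain s where "q = geom_poly p * s" by (elim dvdE)
    then have "geom_poly p * (g0 * s) = geom_poly p * [:c:]"
      using \<open>geom_poly p * [:c:] = g0 * q\<close> by (metis mult.left_commute)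
    then have "g0 * s = [:c:]"
      using geom_poly_nonzero[of p] p1 by (subst (asm) mult_left_cancel) auto
    moreover have "c \<noteq> 0" using \<open>g0 \<noteq> 0\<close> by (simp add: c_def)
    ultimately have "s \<noteq> 0" by auto
    then have "degree g0 = 0"
      using degree_mult_eq[OF \<open>g0 \<noteq> 0\<close>] \<open>g0 * s = [:c:]\<close> by fastforce
    then show ?thesis using \<open>g0 \<noteq> 0\<close> g0_root by (auto elim: degree_eq_zeroE)
  qed (use \<open>g0 \<noteq> 0\<close> dvd_imp_degree_le in blast)
  with p1 min[of g] assms show ?thesis by (simp add: S_def degree_geom_poly)
qed

lemma geom_poly_dvd_if_ipoly_zeta_eq_0:
  assumes p: "prime p" and root: "ipoly g (zeta p) = 0"
  shows "geom_poly p dvd g"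
proof -
  have p1: "p > 1" using p prime_gt_1_nat by blast
  have "lead_coeff (geom_poly p :: int poly) = 1" using p1 by (simp add: degree_geom_poly coeff_geom_poly)
  moreover obtain q r where qr: "pseudo_divmod g (geom_poly p) = (q, r)" by fastforce
  ultimately have eq: "g = geom_poly p * q + r" and "r = 0 \<or> degree r < p - 1"
    using pseudo_divmod[OF geom_poly_nonzero qr] p1 by (simp_all add: degree_geom_poly)
  have "ipoly (geom_poly p) (zeta p) = 0"
    using ipoly_geom_poly_zeta_power[OF p1, of 1] p1 by simp
  then have "ipoly r (zeta p) = 0"
    using arg_cong[OF eq, of "\<lambda>f. ipoly f (zeta p)"] root by simp
  then have "r = 0"
    using degree_ge_if_ipoly_zeta_eq_0[OF p] \<open>r = 0 \<or> degree r < p - 1\<close> by fastforce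
  then show ?thesis using eq by simp
qed

lemma ipoly_zeta_power_eq_0_transfer:
  assumes p: "prime p" and "\<not> p dvd b" "\<not> p dvd a" and root: "ipoly g (zeta p ^ b) = 0"
  shows "ipoly g (zeta p ^ a) = 0"
proof -
  have p1: "p > 1" using p prime_gt_1_nat by blast
  have "ipoly (pcompose g (monom 1 b)) (zeta p) = 0" using root by simp
  from geom_poly_dvd_if_ipoly_zeta_eq_0[OF p this]
  obtain h where h: "pcompose g (monom 1 b) = geom_poly p * h" by (elim dvdE)
  define c where "c = b ^ (p - 2) * a"
  have "\<not> p dvd c" unfolding c_def using assms by (metis prime_dvd_mult_iff prime_dvd_power)
  have "[b ^ (p - 2) * b = 1] (mod p)"
    using fermat_theorem[OF p \<open>\<not> p dvd b\<close>] p1 by (metis Suc_1 Suc_diff_Suc power_Suc2)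
  from cong_mult[OF this cong_refl[of a]] have "[c * b = a] (mod p)"
    unfolding c_def by (simp add: mult_ac)
  then have "zeta p ^ (c * b) = zeta p ^ a" using p1 by (simp add: cong_def zeta_power_eq_iff)
  moreover have "ipoly (pcompose g (monom 1 b)) (zeta p ^ c) = 0"
    unfolding h using ipoly_geom_poly_zeta_power[OF p1 \<open>\<not> p dvd c\<close>] by simp
  ultimately show ?thesis by (simp flip: power_mult)
qed

section \<open>Norms\<close>

definition zeta_norm :: "nat \<Rightarrow> int poly \<Rightarrow> complex" where
  "zeta_norm p g = (\<Prod>a\<in>{1..<p}. ipoly g (zeta p ^ a))"

lemma primroot_power_not_dvd:
  assumes "prime p" "residue_primroot p r"
  shows "\<not> p dvd r ^ k"
proof
  assume "p dvd r ^ k"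
  then have "p dvd r" using assms prime_dvd_power by blast
  with assms show False by (auto simp: residue_primroot_def prime_imp_coprime coprime_absorb_left)
qed

lemma bij_betw_primroot_powers:
  assumes "prime p" "residue_primroot p r"
  shows "bij_betw (\<lambda>k. r ^ k mod p) {..<p - 1} {1..<p}"
proof -
  have "totatives p = {1..<p}" using assms by (auto simp: totatives_prime)
  then show ?thesis
    using residue_primroot_is_generator[of p r] assms prime_gt_1_nat[of p] by (simp add: totient_prime)
qed

lemma prod_zeta_power_reindex_primroot:
  assumes p: "prime p" and r: "residue_primroot p r"
  shows "(\<Prod>a\<in>{1..<p}. f (zeta p ^ a)) = (\<Prod>k<p - 1. f (zeta p ^ (r ^ k)))"
proof -
  have "(\<Prod>k<p - 1. f (zeta p ^ (r ^ k))) = (\<Prod>k<p - 1. f (zeta p ^ (r ^ k mod p)))"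
    using p prime_gt_0_nat by (simp add: zeta_power_mod)
  also have "\<dots> = (\<Prod>a\<in>{1..<p}. f (zeta p ^ a))"
    by (rule prod.reindex_bij_betw[OF bij_betw_primroot_powers[OF p r]])
  finally show ?thesis by simp
qed

lemma prod_zeta_power_reindex_mult:
  assumes p: "prime p" and b: "\<not> p dvd b"
  shows "(\<Prod>a\<in>{1..<p}. f (zeta p ^ (b * a))) = (\<Prod>a\<in>{1..<p}. f (zeta p ^ a))"
proof -
  have p0: "p > 0" using p prime_gt_0_nat by blast
  have "coprime b p" using p b by (metis prime_imp_coprime coprime_commute)
  define h where "h a = (b * a) mod p" for a
  have inj: "inj_on h {1..<p}"
  proof (rule inj_onI)
    fix x y assume "x \<in> {1..<p}" "y \<in> {1..<p}" "h x = h y"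
    then show "x = y"
      using cong_mult_lcancel_nat[OF \<open>coprime b p\<close>, of x y] by (simp add: h_def cong_def)
  qed
  have "h a \<in> {1..<p}" if "a \<in> {1..<p}" for a
  proof -
    have "\<not> p dvd b * a" using p b that by (auto simp: prime_dvd_mult_iff dest: dvd_imp_le)
    then show ?thesis using p0 by (auto simp: h_def dvd_eq_mod_eq_0)
  qed
  then have "h ` {1..<p} \<subseteq> {1..<p}" by blast
  then have "h ` {1..<p} = {1..<p}" by (intro endo_inj_surj inj) simp_all
  have "(\<Prod>a\<in>{1..<p}. f (zeta p ^ (b * a))) = (\<Prod>a\<in>{1..<p}. f (zeta p ^ h a))"
    using p0 by (simp add: h_def zeta_power_mod)
  also have "\<dots> = (\<Prod>a\<in>h ` {1..<p}. f (zeta p ^ a))"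
    by (rule prod.reindex[OF inj, symmetric, unfolded comp_def])
  finally show ?thesis using \<open>h ` {1..<p} = {1..<p}\<close> by simp
qed

lemma zeta_norm_in_Ints:
  assumes "prime p"
  shows "zeta_norm p g \<in> \<int>"
proof (rule in_Ints_if_zeta_conjugates_eq[OF assms])
  fix b assume "b \<in> {1..<p}"
  then have "\<not> p dvd b" by (auto dest: dvd_imp_le)
  then show "ipoly (\<Prod>a\<in>{1..<p}. pcompose g (monom 1 a)) (zeta p ^ b) = zeta_norm p g"
    unfolding zeta_norm_def using prod_zeta_power_reindex_mult[OF assms]
    by (simp add: power_mult)
qed

lemma zeta_norm_linear_power_mult:
  assumes "p > 1"
  shows "zeta_norm p ([:1, -1:] ^ m * g) = of_nat p ^ m * zeta_norm p g"
  using prod_one_minus_zeta_power[OF assms]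
  by (simp add: zeta_norm_def prod.distrib flip: prod_power_distrib)

lemma zeta_norm_nonzero:
  assumes p: "prime p" and "\<not> p dvd b" and "ipoly g (zeta p ^ b) \<noteq> 0"
  shows "zeta_norm p g \<noteq> 0"
proof
  assume "zeta_norm p g = 0"
  then obtain a where "a \<in> {1..<p}" "ipoly g (zeta p ^ a) = 0" by (auto simp: zeta_norm_def)
  moreover from this have "\<not> p dvd a" by (auto dest: dvd_imp_le)
  ultimately show False using ipoly_zeta_power_eq_0_transfer[OF p _ assms(2)] assms(3) by blast
qed

lemma periodic_add_mult:
  fixes f :: "nat \<Rightarrow> 'a"
  assumes "\<And>k. f (k + n) = f k"
  shows "f (q * n + i) = f i"
  using assms by (induction q) (simp_all, metis add.commute add.left_commute)

lemma prod_lessThan_shift_periodic: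
  fixes f :: "nat \<Rightarrow> 'a::comm_monoid_mult"
  assumes per: "\<And>k. f (k + n) = f k" and "n > 0"
  shows "(\<Prod>i<n. f (k + i)) = (\<Prod>i<n. f i)"
proof (induction k)
  case (Suc k)
  define g where "g i = f (k + i)" for i
  have "(\<Prod>i<n. f (Suc k + i)) = (\<Prod>i\<in>{Suc 0..<Suc n}. g i)"
    by (simp only: g_def prod.shift_bounds_Suc_ivl atLeast0LessThan[symmetric] add_Suc_shift)
  also have "\<dots> = g n * (\<Prod>i\<in>{1..<n}. g i)"
    using \<open>n > 0\<close> by (subst prod.atLeastLessThan_Suc) (auto simp: mult.commute)
  also have "\<dots> = (\<Prod>i<n. g i)"
    using per[of k] \<open>n > 0\<close>
    by (simp add: g_def add.commute atLeast0LessThan[symmetric] prod.atLeast_Suc_lessThan)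
  finally show ?case using Suc by (simp add: g_def)
qed simp

lemma prime_power_dvd_if_dvd_power:
  fixes q N :: int
  assumes q: "prime q" and "N \<noteq> 0" and dvd: "q ^ m dvd N ^ e" and "e * k < m"
  shows "q ^ Suc k dvd N"
proof (rule ccontr)
  assume "\<not> q ^ Suc k dvd N"
  have "\<not> is_unit q" using q not_prime_unit by blast
  have "m \<le> multiplicity q (N ^ e)"
    using dvd \<open>N \<noteq> 0\<close> \<open>\<not> is_unit q\<close> by (intro multiplicity_geI) simp_all
  also have "\<dots> = e * multiplicity q N"
    by (rule prime_elem_multiplicity_power_distrib[OF prime_imp_prime_elem[OF q] \<open>N \<noteq> 0\<close>])
  also have "\<dots> \<le> e * k"
    using multiplicity_lessI[OF \<open>N \<noteq> 0\<close> \<open>\<not> is_unit q\<close> \<open>\<not> q ^ Suc k dvd N\<close>] by simp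
  finally show False using \<open>e * k < m\<close> by simp
qed

definition partial_norm :: "nat \<Rightarrow> nat \<Rightarrow> nat \<Rightarrow> int poly \<Rightarrow> complex" where
  "partial_norm p r n g = (\<Prod>i<n. ipoly g (zeta p ^ r ^ i))"

text \<open>When \<open>g(\<zeta>)\<close> is fixed by
  \<open>\<sigma>\<^sup>n\<close>, i.e. under the periodicity assumption below, \<open>partial_norm p r n g\<close> is the norm
  \<open>N\<^bsub>K/\<rat>\<^esub>(g(\<zeta>))\<close> from the fixed field \<open>K\<close> of \<open>\<sigma>\<^sup>n\<close>.\<close>

context
  fixes p r n :: nat and Y :: "int poly"
  assumes p: "prime p" and r: "residue_primroot p r" and "n > 0"
    and periodic: "\<And>k. ipoly Y (zeta p ^ r ^ (k + n)) = ipoly Y (zeta p ^ r ^ k)"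
begin

lemma partial_norm_in_Ints: "partial_norm p r n Y \<in> \<int>"
proof (rule in_Ints_if_zeta_conjugates_eq[OF p])
  fix a assume "a \<in> {1..<p}"
  then have "a \<in> (\<lambda>k. r ^ k mod p) ` {..<p - 1}"
    using bij_betw_primroot_powers[OF p r] by (simp add: bij_betw_def)
  then obtain k where "r ^ k mod p = a" by blast
  then have "(a * r ^ i) mod p = r ^ (k + i) mod p" for i
    by (metis mod_mult_left_eq power_add)
  then have "zeta p ^ (a * r ^ i) = zeta p ^ r ^ (k + i)" for i
    using p prime_gt_0_nat by (simp add: zeta_power_eq_iff)
  then have "ipoly (\<Prod>i<n. pcompose Y (monom 1 (r ^ i))) (zeta p ^ a) =
      (\<Prod>i<n. ipoly Y (zeta p ^ r ^ (k + i)))"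
    by (simp flip: power_mult)
  also have "\<dots> = partial_norm p r n Y"
    unfolding partial_norm_def
    by (rule prod_lessThan_shift_periodic[where f = "\<lambda>i. ipoly Y (zeta p ^ r ^ i)", OF periodic \<open>n > 0\<close>])
  finally show "ipoly (\<Prod>i<n. pcompose Y (monom 1 (r ^ i))) (zeta p ^ a) = partial_norm p r n Y" .
qed

lemma zeta_norm_eq_partial_norm_power:
  assumes "n dvd p - 1"
  shows "zeta_norm p Y = partial_norm p r n Y ^ ((p - 1) div n)"
proof -
  define e where "e = (p - 1) div n"
  have "zeta_norm p Y = (\<Prod>k<e * n. ipoly Y (zeta p ^ r ^ k))"
    using assms prod_zeta_power_reindex_primroot[OF p r] by (simp add: zeta_norm_def e_def)
  also have "\<dots> = (\<Prod>q<e. \<Prod>i\<in>{q * n..<q * n + n}. ipoly Y (zeta p ^ r ^ i))"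
    by (rule prod.nat_group[symmetric])
  also have "\<dots> = (\<Prod>q<e. partial_norm p r n Y)"
  proof (rule prod.cong[OF refl])
    fix q
    have "(\<Prod>i\<in>{q * n..<q * n + n}. ipoly Y (zeta p ^ r ^ i)) =
        (\<Prod>i<n. ipoly Y (zeta p ^ r ^ (q * n + i)))"
      by (simp add: prod.shift_bounds_nat_ivl[of _ 0 "q * n" n, simplified] atLeast0LessThan add.commute)
    also have "\<dots> = partial_norm p r n Y"
      using periodic_add_mult[where f = "\<lambda>i. ipoly Y (zeta p ^ r ^ i)", OF periodic]
      by (simp add: partial_norm_def)
    finally show "(\<Prod>i\<in>{q * n..<q * n + n}. ipoly Y (zeta p ^ r ^ i)) = partial_norm p r n Y" .
  qed
  finally show ?thesis by (simp add: e_def)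
qed

lemma prime_power_le_abs_if_power_eq:
  fixes N M :: int
  assumes p: "prime p" and "odd n" "n dvd p - 1" "N \<noteq> 0"
    and eq: "N ^ ((p - 1) div n) = int p ^ ((p + 1) div 2) * M"
  shows "int p ^ ((n + 1) div 2) \<le> \<bar>N\<bar>"
proof -
  define e where "e = (p - 1) div n"
  have "e * n = p - 1" using \<open>n dvd p - 1\<close> by (simp add: e_def)
  obtain k where k: "n = 2 * k + 1" using \<open>odd n\<close> by (elim oddE)
  then have "2 * (e * k) \<le> p - 1"
    using \<open>e * n = p - 1\<close> by (simp add: algebra_simps)
  then have "e * k < (p + 1) div 2"
    using p prime_gt_1_nat[of p] by presburger
  then have "int p ^ Suc k dvd N"
    using p \<open>N \<noteq> 0\<close> eq by (intro prime_power_dvd_if_dvd_power) (auto simp: e_def)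
  then have "\<bar>int p ^ Suc k\<bar> \<le> \<bar>N\<bar>" by (rule dvd_imp_le_int[OF \<open>N \<noteq> 0\<close>])
  then show ?thesis using k by simp
qed

text \<open>The \<open>(p-1)/n\<close>-th power of the partial norm is the full norm, a multiple of
  \<open>p^((p+1)/2)\<close>; comparing \<open>p\<close>-adic valuations then forces \<open>p^((n+1)/2)\<close> to divide it.\<close>

lemma partial_norm_lower_bound:
  assumes "odd n" "n dvd p - 1"
    and dvd: "[:1, -1:] ^ ((p + 1) div 2) dvd Y"
    and nonzero: "ipoly Y (zeta p ^ r ^ j) \<noteq> 0"
  shows "real p ^ ((n + 1) div 2) \<le> cmod (partial_norm p r n Y)"
proof -
  have p1: "p > 1" using p prime_gt_1_nat by blast
  define e where "e = (p - 1) div n"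
  define m where "m = (p + 1) div 2"
  obtain N where N: "partial_norm p r n Y = of_int N"
    using partial_norm_in_Ints by (auto elim: Ints_cases)
  obtain W where W: "Y = [:1, -1:] ^ m * W" using dvd unfolding m_def by (elim dvdE)
  obtain M where M: "zeta_norm p W = of_int M"
    using zeta_norm_in_Ints[OF p, of W] by (auto elim: Ints_cases)
  have "of_int (N ^ e) = zeta_norm p Y"
    using zeta_norm_eq_partial_norm_power \<open>n dvd p - 1\<close> N by (simp add: e_def)
  also have "\<dots> = of_int (int p ^ m * M)"
    using zeta_norm_linear_power_mult[OF p1] W M by simp
  finally have "N ^ e = int p ^ m * M" by (simp only: of_int_eq_iff)
  have "e * n = p - 1" using \<open>n dvd p - 1\<close> by (simp add: e_def)
  then have "e > 0" using p1 by (cases e) auto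
  have "N \<noteq> 0"
  proof
    assume "N = 0"
    then have "zeta_norm p Y = 0"
      using \<open>of_int (N ^ e) = zeta_norm p Y\<close> \<open>e > 0\<close> by (simp add: power_0_left)
    then show False using zeta_norm_nonzero[OF p primroot_power_not_dvd[OF p r] nonzero] by simp
  qed
  have "int p ^ ((n + 1) div 2) \<le> \<bar>N\<bar>"
    using \<open>N ^ e = int p ^ m * M\<close> unfolding e_def m_def
    by (rule prime_power_le_abs_if_power_eq[OF p \<open>odd n\<close> \<open>n dvd p - 1\<close> \<open>N \<noteq> 0\<close>])
  then have "real_of_int (int p ^ ((n + 1) div 2)) \<le> real_of_int \<bar>N\<bar>"
    by (simp only: of_int_le_iff)
  then show ?thesis unfolding N by simp
qed

end

section \<open>Lattice vectors as values of integer polynomials\<close>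

text \<open>Integer polynomials whose values at \<open>\<zeta>\<^sub>p\<close> are \<open>z\<close>, \<open>x\<close>, \<open>\<sigma>\<^sup>t(x)\<close>, the generators of \<open>M\<close>
  and the element of \<open>M\<close> with coordinates \<open>a\<close>; the exponent \<open>\<lambda>\<close> of \<open>\<zeta>\<^sup>\<lambda>\<close> is reduced
  modulo \<open>p\<close> to make it a natural number.\<close>

definition z_poly :: "nat \<Rightarrow> nat \<Rightarrow> int \<Rightarrow> int poly" where
  "z_poly p r lam = monom 1 (nat (lam mod int p)) *
     (\<Prod>j\<in>{0..(p - 3) div 2}. 1 - monom 1 (r ^ j)) * [:1, -1:]"

definition x_poly :: "nat \<Rightarrow> nat \<Rightarrow> nat \<Rightarrow> int \<Rightarrow> int poly" where
  "x_poly n p r lam = (\<Sum>j\<in>{1..(p - 1) div n}. pcompose (z_poly p r lam) (monom 1 (r ^ (j * n))))"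

definition sigma_x_poly :: "nat \<Rightarrow> nat \<Rightarrow> nat \<Rightarrow> int \<Rightarrow> nat \<Rightarrow> int poly" where
  "sigma_x_poly n p r lam t = pcompose (x_poly n p r lam) (monom 1 (r ^ t))"

definition generator_poly :: "nat \<Rightarrow> nat \<Rightarrow> nat \<Rightarrow> int \<Rightarrow> nat \<Rightarrow> int poly" where
  "generator_poly n p r lam l =
     (if l = 0 then sigma_x_poly n p r lam 0 + sigma_x_poly n p r lam 1
      else if l = 1 then sigma_x_poly n p r lam 0 - sigma_x_poly n p r lam 1
      else sigma_x_poly n p r lam (l - 1) - sigma_x_poly n p r lam l)"

definition lattice_poly :: "nat \<Rightarrow> nat \<Rightarrow> nat \<Rightarrow> int \<Rightarrow> (nat \<Rightarrow> int) \<Rightarrow> int poly" where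
  "lattice_poly n p r lam a = (\<Sum>l<n. smult (a l) (generator_poly n p r lam l))"

lemma power_int_root_of_unity:
  fixes w :: "'a::field"
  assumes "p > 0" and w: "w ^ p = 1"
  shows "w powi k = w ^ nat (k mod int p)"
proof -
  have "w \<noteq> 0" using assms by (metis power_0_left less_not_refl2 zero_neq_one)
  have k: "k = int (nat (k mod int p)) + int p * (k div int p)"
    using assms by simp
  have "w powi k = w powi int (nat (k mod int p)) * w powi (int p * (k div int p))"
    by (subst k, rule power_int_add) (simp add: \<open>w \<noteq> 0\<close>)
  also have "w powi (int p * (k div int p)) = 1"
    using w by (simp add: power_int_mult)
  finally show ?thesis by (simp only: power_int_of_nat mult_1_right)
qed

lemma zfun_eq_ipoly_z_poly:
  assumes "p > 0"
  shows "zfun p r lam (zeta p ^ t) = ipoly (z_poly p r lam) (zeta p ^ t)"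
  using power_int_root_of_unity[OF assms zeta_power_power_self[OF assms]]
  unfolding zfun_def z_poly_def ipoly_mult ipoly_linear ipoly_prod ipoly_diff ipoly_1 ipoly_monom
  by simp

lemma sigx_eq_ipoly_x_poly:
  assumes "p > 0"
  shows "sigx n p r lam k = ipoly (x_poly n p r lam) (zeta p ^ r ^ k)"
  unfolding sigx_def x_poly_def
  by (simp add: zfun_eq_ipoly_z_poly[OF assms] power_add mult.commute flip: power_mult)

lemma ipoly_generator_poly:
  assumes "p > 0"
  shows "ipoly (generator_poly n p r lam l) (zeta p ^ r ^ k) = sig_gen n p r lam l k"
proof -
  have "ipoly (sigma_x_poly n p r lam t) (zeta p ^ r ^ k) = sigx n p r lam (k + t)" for t
    by (simp add: sigma_x_poly_def sigx_eq_ipoly_x_poly[OF assms] power_add flip: power_mult)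
  moreover have "l \<ge> 2 \<Longrightarrow> k + l - 1 = k + (l - 1)" by simp
  ultimately show ?thesis by (simp add: generator_poly_def sig_gen_def)
qed

lemma ipoly_lattice_poly:
  assumes "p > 0"
  shows "ipoly (lattice_poly n p r lam a) (zeta p ^ r ^ k) = (\<Sum>l<n. of_int (a l) * sig_gen n p r lam l k)"
  by (simp add: lattice_poly_def ipoly_generator_poly[OF assms])

lemma sigx_periodic:
  assumes p: "prime p" and r: "residue_primroot p r" and "n dvd p - 1"
  shows "sigx n p r lam (k + n) = sigx n p r lam k"
proof -
  have p1: "p > 1" using p prime_gt_1_nat by blast
  define e where "e = (p - 1) div n"
  have "e * n = p - 1" using assms by (simp add: e_def)
  then have "e \<ge> 1" using p1 by (cases e) auto
  define F where "F j = zfun p r lam (zeta p ^ r ^ (j * n + k))" for j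
  have "[r ^ (p - 1) = 1] (mod p)"
    using fermat_theorem[OF p] primroot_power_not_dvd[OF p r, of 1] by simp
  then have "[r ^ (p - 1) * r ^ (n + k) = r ^ (n + k)] (mod p)"
    using cong_mult[OF _ cong_refl] by fastforce
  moreover have "r ^ (Suc e * n + k) = r ^ (p - 1) * r ^ (n + k)"
    using \<open>e * n = p - 1\<close> by (simp add: algebra_simps flip: power_add)
  ultimately have "r ^ (Suc e * n + k) mod p = r ^ (1 * n + k) mod p" by (simp add: cong_def)
  then have "zeta p ^ r ^ (Suc e * n + k) = zeta p ^ r ^ (1 * n + k)"
    using p1 zeta_power_eq_iff[of p "r ^ (Suc e * n + k)" "r ^ (1 * n + k)"] by linarith
  then have "F (Suc e) = F 1" by (simp only: F_def)
  have "sigx n p r lam (k + n) = (\<Sum>j\<in>{1..e}. F (Suc j))"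
    unfolding sigx_def F_def e_def by (intro sum.cong refl) (simp add: algebra_simps)
  also have "\<dots> = sum F {2..e} + F (Suc e)"
    using \<open>e \<ge> 1\<close> by (simp add: sum.shift_bounds_cl_Suc_ivl[symmetric] sum.cl_ivl_Suc numeral_2_eq_2)
  also have "\<dots> = sum F {1..e}"
    using \<open>e \<ge> 1\<close> \<open>F (Suc e) = F 1\<close> by (simp add: sum.atLeast_Suc_atMost add.commute numeral_2_eq_2)
  finally show ?thesis unfolding sigx_def F_def e_def .
qed

lemma ipoly_lattice_poly_periodic:
  assumes p: "prime p" and r: "residue_primroot p r" and "n dvd p - 1"
  shows "ipoly (lattice_poly n p r lam a) (zeta p ^ r ^ (k + n)) =
    ipoly (lattice_poly n p r lam a) (zeta p ^ r ^ k)"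
proof -
  have shift: "sigx n p r lam (k + n + t) = sigx n p r lam (k + t)" for t
    using sigx_periodic[OF assms, of lam "k + t"] by (simp add: algebra_simps)
  have "sig_gen n p r lam l (k + n) = sig_gen n p r lam l k" for l
    unfolding sig_gen_def using shift[of 0] shift[of 1] shift[of "l - 1"] shift[of l]
    by (cases "l \<ge> 2") (auto simp: algebra_simps)
  then show ?thesis using p prime_gt_0_nat by (simp add: ipoly_lattice_poly)
qed

lemma one_minus_monom_eq: "1 - monom (1::int) k = [:1, -1:] * geom_poly k"
proof -
  have "[:1, -1:] = - [:-1, 1::int:]" by simp
  then show ?thesis by (simp only: mult_minus_left linear_times_geom_poly minus_diff_eq)
qed

lemma pcompose_power: "pcompose (f ^ k) g = pcompose f g ^ k"
  by (induction k) (simp_all add: pcompose_1 pcompose_mult)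

lemma linear_power_dvd_pcompose_monom:
  assumes "[:1, -1:] ^ m dvd f"
  shows "[:1, -1:] ^ m dvd pcompose f (monom (1::int) s)"
proof -
  obtain g where "f = [:1, -1:] ^ m * g" using assms by (elim dvdE)
  moreover have "pcompose [:1, -1:] (monom (1::int) s) = 1 - monom 1 s"
    by (simp add: pcompose_pCons one_pCons[symmetric] algebra_simps)
  ultimately have "pcompose f (monom 1 s) = ([:1, -1:] * geom_poly s) ^ m * pcompose g (monom 1 s)"
    by (simp only: pcompose_mult pcompose_power one_minus_monom_eq)
  then have "pcompose f (monom 1 s) = [:1, -1:] ^ m * (geom_poly s ^ m * pcompose g (monom 1 s))"
    by (simp only: power_mult_distrib mult_ac)
  then show ?thesis by simp
qed

lemma linear_power_dvd_z_poly:
  assumes "odd p" "p \<ge> 3"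
  shows "[:1, -1:] ^ ((p + 1) div 2) dvd z_poly p r lam"
proof -
  define J where "J = {0..(p - 3) div 2}"
  have "Suc (card J) = (p + 1) div 2" using assms unfolding J_def by (auto elim!: oddE)
  have "(\<Prod>j\<in>J. [:1, -1:]) dvd (\<Prod>j\<in>J. 1 - monom (1::int) (r ^ j))"
    by (intro prod_dvd_prod) (simp only: one_minus_monom_eq dvd_triv_left)
  then have "[:1, -1:] ^ card J * [:1, -1:] dvd (\<Prod>j\<in>J. 1 - monom (1::int) (r ^ j)) * [:1, -1:]"
    unfolding prod_constant by (rule mult_dvd_mono[OF _ dvd_refl])
  then have "[:1, -1:] ^ ((p + 1) div 2) dvd
      monom 1 (nat (lam mod int p)) * ((\<Prod>j\<in>J. 1 - monom (1::int) (r ^ j)) * [:1, -1:])"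
    unfolding \<open>Suc (card J) = (p + 1) div 2\<close>[symmetric] power_Suc2 by (rule dvd_mult)
  then show ?thesis unfolding z_poly_def J_def by (simp only: mult.assoc)
qed

lemma linear_power_dvd_lattice_poly:
  assumes "odd p" "p \<ge> 3"
  shows "[:1, -1:] ^ ((p + 1) div 2) dvd lattice_poly n p r lam a"
proof -
  have "[:1, -1:] ^ ((p + 1) div 2) dvd x_poly n p r lam"
    unfolding x_poly_def by (intro dvd_sum linear_power_dvd_pcompose_monom linear_power_dvd_z_poly assms)
  then have "[:1, -1:] ^ ((p + 1) div 2) dvd generator_poly n p r lam l" for l
    by (simp add: generator_poly_def sigma_x_poly_def linear_power_dvd_pcompose_monom)
  then show ?thesis unfolding lattice_poly_def by (intro dvd_sum dvd_smult)
qed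

section \<open>The product distance of \<open>\<phi>\<^sub>1\<^sub>/\<^sub>p\<^sub>\<^sup>2(M)\<close>\<close>

lemma phiM_inverse_square:
  assumes "p > 0"
  shows "phiM n p r lam (1 / (real p)\<^sup>2) =
    range (\<lambda>a i. ipoly (lattice_poly n p r lam a) (zeta p ^ r ^ i) / of_nat p)"
  using assms by (auto simp: phiM_def ipoly_lattice_poly real_sqrt_divide field_simps)

lemma phiM_product_lower_bound:
  assumes p: "prime p" and r: "residue_primroot p r"
    and n: "odd n" "n > 1" "n dvd p - 1"
    and v: "v \<in> phiM n p r lam (1 / (real p)\<^sup>2)" and nonzero: "v j \<noteq> 0"
  shows "real p powr ((1 - real n) / 2) \<le> cmod (\<Prod>i<n. v i)"
proof -
  have p1: "p > 1" using p prime_gt_1_nat by blast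
  have "n \<le> p - 1" using n p1 by (intro dvd_imp_le) auto
  then have "odd p" "p \<ge> 3" using n p by (auto simp: prime_odd_nat)
  obtain a where va: "v = (\<lambda>i. ipoly (lattice_poly n p r lam a) (zeta p ^ r ^ i) / of_nat p)"
    using v phiM_inverse_square p1 by auto
  define Y where "Y = lattice_poly n p r lam a"
  have "real p ^ ((n + 1) div 2) \<le> cmod (partial_norm p r n Y)"
  proof (rule partial_norm_lower_bound[OF p r _ _ n(1,3)])
    show "n > 0" using n by simp
    show "ipoly Y (zeta p ^ r ^ (k + n)) = ipoly Y (zeta p ^ r ^ k)" for k
      unfolding Y_def by (rule ipoly_lattice_poly_periodic[OF p r n(3)])
    show "[:1, -1:] ^ ((p + 1) div 2) dvd Y"
      unfolding Y_def by (rule linear_power_dvd_lattice_poly[OF \<open>odd p\<close> \<open>p \<ge> 3\<close>])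
    show "ipoly Y (zeta p ^ r ^ j) \<noteq> 0" using nonzero by (simp add: va Y_def)
  qed
  moreover have "cmod (\<Prod>i<n. v i) = cmod (partial_norm p r n Y) / real p ^ n"
    by (simp add: va Y_def partial_norm_def prod_dividef norm_divide norm_power)
  moreover have "real p powr ((1 - real n) / 2) = real p ^ ((n + 1) div 2) / real p ^ n"
  proof -
    have "(1 - real n) / 2 = real ((n + 1) div 2) - real n" using n(1) by (auto elim!: oddE)
    then have "real p powr ((1 - real n) / 2) = real p powr real ((n + 1) div 2) / real p powr real n"
      by (simp only: powr_diff)
    then show ?thesis using p1 by (simp add: powr_realpow)
  qed
  ultimately show ?thesis using p1 by (simp add: divide_right_mono)
qed

lemma phiM_has_nonzero_vector:
  assumes "n > 1" "beta > 0" "sigx n p r lam 0 \<noteq> 0"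
  shows "\<exists>v \<in> phiM n p r lam beta. v 0 \<noteq> 0"
proof -
  have "sig_gen n p r lam 0 0 \<noteq> 0 \<or> sig_gen n p r lam 1 0 \<noteq> 0"
  proof (rule ccontr)
    assume "\<not> ?thesis"
    moreover have "2 * sigx n p r lam 0 = sig_gen n p r lam 0 0 + sig_gen n p r lam 1 0"
      by (simp add: sig_gen_def)
    ultimately show False using assms(3) by simp
  qed
  then obtain l where "l < n" "sig_gen n p r lam l 0 \<noteq> 0" using assms(1) by force
  define a :: "nat \<Rightarrow> int" where "a = (\<lambda>l'. if l' = l then 1 else 0)"
  have "(\<Sum>l'<n. of_int (a l') * sig_gen n p r lam l' 0) =
      (\<Sum>l'<n. if l' = l then sig_gen n p r lam l' 0 else 0)"
    by (intro sum.cong) (auto simp: a_def)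
  also have "\<dots> = sig_gen n p r lam l 0" using \<open>l < n\<close> by simp
  finally have sum0: "(\<Sum>l'<n. of_int (a l') * sig_gen n p r lam l' 0) = sig_gen n p r lam l 0" .
  define v where "v = (\<lambda>i. of_real (sqrt beta) * (\<Sum>l'<n. of_int (a l') * sig_gen n p r lam l' i))"
  have "v \<in> phiM n p r lam beta" unfolding phiM_def v_def by blast
  moreover have "v 0 \<noteq> 0"
    using sum0 \<open>sig_gen n p r lam l 0 \<noteq> 0\<close> assms(2) by (simp add: v_def)
  ultimately show ?thesis by blast
qed

theorem corollary2:
  fixes n p r :: nat and lam :: int
  assumes "n > 1" and "odd n"
    and "prime p" and "[p = 1] (mod n)"
    and "residue_primroot p r"
    and "[lam * (int r - 1) = 1] (mod int p)"
    and "sigx n p r lam 0 \<noteq> 0"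
    and "sigx n p r lam 1 / sigx n p r lam 0 \<in> Zzeta p"
  shows "dpmin n (phiM n p r lam (1 / (real p)^2)) \<ge> real p powr ((1 - real n) / 2)"
proof -
  have "n dvd p - 1" using \<open>[p = 1] (mod n)\<close> by (rule cong_to_1_nat)
  have "1 / (real p)^2 > 0" using \<open>prime p\<close> prime_gt_0_nat by simp
  then obtain v where "v \<in> phiM n p r lam (1 / (real p)^2)" "v 0 \<noteq> 0"
    using phiM_has_nonzero_vector[OF \<open>n > 1\<close> _ \<open>sigx n p r lam 0 \<noteq> 0\<close>] by blast
  moreover have "0 < n" using \<open>n > 1\<close> by simp
  ultimately have "{cmod (\<Prod>i<n. v i) | v. v \<in> phiM n p r lam (1 / (real p)^2) \<and> (\<exists>i<n. v i \<noteq> 0)} \<noteq> {}"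
    by blast
  then show ?thesis
    unfolding dpmin_def using phiM_product_lower_bound[OF \<open>prime p\<close> \<open>residue_primroot p r\<close>
        \<open>odd n\<close> \<open>n > 1\<close> \<open>n dvd p - 1\<close>]
    by (intro cInf_greatest) auto
qed

end
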